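(* Let $\theta\in[\pi/4,\pi/3)$, $o=(0,0)$, $p=(1,0)$, and let $\mathbb{R}^2_-=\{(x,y)\mid y\leq 0\}$. Let $u,v\in\mathbb{R}^2_-$ be points with $0<x_u<1$, $|\varphi(uv)-\pi|<\pi/6$, and $|ou|,|pv|\in[|uv|,1)$. Define $$\mathcal{T}'=u+|uv|\,\mathrm{Rot}_{\varphi(uv)}\big(\mathcal{T}_\theta^-\big).$$ Then $\mathcal{T}'\setminus\mathcal{T}_\theta\subseteq\mathbb{R}^2_-$.
   Context: The curved trapezoid is the open set $\mathcal{T}_\theta=\{(x,y)\mid 0<x<1,\ 0<y<\sin\theta,\ x^2+y^2<1,\ (x-1)^2+y^2<1\}$. For a set $\mathcal{O}\subset\mathbb{R}^2$: $\mathcal{O}^-$ is its reflection through the $x$-axis; $\mathrm{Rot}_{\gamma}(\mathcal{O})$ is its rotation by angle $\gamma$ counterclockwise about the origin; $\lambda\mathcal{O}=\{\lambda z\mid z\in\mathcal{O}\}$; $u+\mathcal{O}=\{u+z\mid z\in\mathcal{O}\}$. $x_u$ denotes the $x$-coordinate of $u$, and $\varphi(uv)$ is the polar angle (from the positive $x$-axis, modulo $2\pi$) of the vector $\overrightarrow{uv}$. *)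

theory Defs
  imports "HOL-Analysis.Analysis"
begin

text \<open>Points of the plane are represented as complex numbers (x + i y).\<close>

definition curved_trapezoid :: "real \<Rightarrow> complex set" where
  "curved_trapezoid \<theta> = {z. 0 < Re z \<and> Re z < 1 \<and> 0 < Im z \<and> Im z < sin \<theta>
      \<and> (Re z)\<^sup>2 + (Im z)\<^sup>2 < 1 \<and> (Re z - 1)\<^sup>2 + (Im z)\<^sup>2 < 1}"

definition reflect_x :: "complex set \<Rightarrow> complex set" where
  "reflect_x S = cnj ` S"

definition rot :: "real \<Rightarrow> complex set \<Rightarrow> complex set" where
  "rot \<gamma> S = (\<lambda>z. cis \<gamma> * z) ` S"

definition scale_set :: "real \<Rightarrow> complex set \<Rightarrow> complex set" where
  "scale_set r S = (\<lambda>z. complex_of_real r * z) ` S"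

definition translate_set :: "complex \<Rightarrow> complex set \<Rightarrow> complex set" where
  "translate_set u S = (\<lambda>z. u + z) ` S"

text \<open>Polar angle of the vector from u to v, taken in [0, 2 pi).\<close>
definition polar_angle :: "complex \<Rightarrow> complex \<Rightarrow> real" where
  "polar_angle u v = (if Arg (v - u) < 0 then Arg (v - u) + 2 * pi else Arg (v - u))"

definition lower_half_plane :: "complex set" where
  "lower_half_plane = {z. Im z \<le> 0}"

end

theory Submission
  imports Defs
begin

text \<open>The copy \<open>T'\<close> is the image of \<open>T\<^sub>\<theta>\<close> under \<open>z \<mapsto> u + (v - u) z\<^sup>*\<close>, so every point \<open>w\<close>
  of \<open>T'\<close> satisfies \<open>|w - u| < |uv| \<le> |ou|\<close> and \<open>|w - v| < |uv| \<le> |pv|\<close>. A point of the upper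
  half plane that is closer to a lower point \<open>u\<close> with \<open>0 < x\<^sub>u \<le> 1\<close> than \<open>u\<close> is to \<open>o\<close> lies
  in the unit disc around \<open>p\<close>; symmetrically \<open>w\<close> lies in the unit disc around \<open>o\<close>, as the
  angle condition puts \<open>v\<close> to the left of \<open>u\<close>. Finally the height of \<open>w\<close> is at most \<open>|uv| < 1\<close>
  times the height of its preimage, hence below \<open>sin \<theta>\<close>. So a point of \<open>T'\<close> above the
  \<open>x\<close>-axis lies in \<open>T\<^sub>\<theta>\<close>.\<close>

lemma curved_trapezoid_eq:
  "curved_trapezoid \<theta> = {z. 0 < Im z \<and> Im z < sin \<theta> \<and> cmod z < 1 \<and> cmod (z - 1) < 1}"
proof -
  have disc: "cmod z < 1 \<longleftrightarrow> (Re z)\<^sup>2 + (Im z)\<^sup>2 < 1" for z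
    by (simp add: cmod_def)
  have "0 < Re z \<and> Re z < 1" if "(Re z)\<^sup>2 + (Im z)\<^sup>2 < 1" "(Re z - 1)\<^sup>2 + (Im z)\<^sup>2 < 1" for z
  proof -
    have "(Re z)\<^sup>2 < 1" "(Re z - 1)\<^sup>2 < 1"
      using that zero_le_power2[of "Im z"] by linarith+
    then have "\<bar>Re z\<bar> < 1" "\<bar>Re z - 1\<bar> < 1"
      by (simp_all add: abs_square_less_1)
    then show ?thesis
      by linarith
  qed
  then show ?thesis
    unfolding curved_trapezoid_def disc disc[of "z - 1" for z] by auto
qed

lemma dist_mult_cis_polar_angle:
  "complex_of_real (dist u v) * cis (polar_angle u v) = v - u"
proof -
  have "cis (polar_angle u v) = cis (Arg (v - u))"
    unfolding polar_angle_def by (simp add: cis_mult[symmetric])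
  then show ?thesis
    using rcis_cmod_Arg[of "v - u"] by (simp add: rcis_def dist_norm norm_minus_commute)
qed

lemma translate_scale_rot_reflect_polar_angle:
  "translate_set u (scale_set (dist u v) (rot (polar_angle u v) (reflect_x S)))
     = (\<lambda>z. u + (v - u) * cnj z) ` S"
  unfolding translate_set_def scale_set_def rot_def reflect_x_def image_image
  by (simp add: mult.assoc[symmetric] dist_mult_cis_polar_angle)

lemma Re_lt_if_polar_angle_near_pi:
  assumes "\<bar>polar_angle u v - pi\<bar> < pi / 2"
  shows "Re v < Re u"
proof -
  have "v \<noteq> u"
    using assms by (auto simp: polar_angle_def Arg_zero)
  have "- (pi / 2) < polar_angle u v - pi" "polar_angle u v - pi < pi / 2"
    using assms unfolding abs_less_iff by linarith+
  then have "0 < cos (polar_angle u v - pi)"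
    by (rule cos_gt_zero_pi)
  then have "cos (polar_angle u v) < 0"
    by simp
  moreover have "Re (v - u) = dist u v * cos (polar_angle u v)"
    by (simp flip: dist_mult_cis_polar_angle)
  moreover have "0 < dist u v"
    using \<open>v \<noteq> u\<close> by simp
  ultimately have "Re (v - u) < 0"
    by (simp only:) (rule mult_pos_neg)
  then show ?thesis
    by simp
qed

text \<open>Expanding the squares, \<open>|w - u| < |u|\<close> reads \<open>|w|\<^sup>2 < 2 Re (w u\<^sup>*)\<close>, and the sign
  conditions bound \<open>Re (w u\<^sup>*)\<close> by \<open>Re w\<close>.\<close>

lemma cmod_diff_one_lt_one_if_near_lower_point:
  assumes "cmod (w - u) < cmod u" and "0 < Im w" and "Im u \<le> 0"
    and "0 < Re u" and "Re u \<le> 1"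
  shows "cmod (w - 1) < 1"
proof -
  have "(cmod (w - u))\<^sup>2 < (cmod u)\<^sup>2"
    using assms(1) by (simp add: power_strict_mono)
  then have near: "(Re w)\<^sup>2 + (Im w)\<^sup>2 < 2 * (Re w * Re u + Im w * Im u)"
    by (simp add: cmod_power2 power2_diff algebra_simps)
  have "Im w * Im u \<le> 0"
    using assms(2,3) by (simp add: mult_nonneg_nonpos)
  with near have near': "(Re w)\<^sup>2 + (Im w)\<^sup>2 < 2 * (Re w * Re u)"
    by (simp add: distrib_left)
  then have "0 < Re w"
    using assms(4) by (smt (verit) zero_le_power2 mult_nonpos_nonneg)
  then have "Re w * Re u \<le> Re w"
    using assms(5) by (simp add: mult_left_le)
  with near' have "(cmod (w - 1))\<^sup>2 < 1"
    by (simp add: cmod_power2 power2_diff algebra_simps)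
  then show ?thesis
    by (simp add: power_less_one_iff)
qed

lemma cmod_lt_one_if_near_lower_point:
  assumes "cmod (w - v) < cmod (v - 1)" and "0 < Im w" and "Im v \<le> 0"
    and "0 \<le> Re v" and "Re v < 1"
  shows "cmod w < 1"
proof -
  have "(1 - cnj w) - (1 - cnj v) = cnj (v - w)" "1 - cnj v = cnj (1 - v)"
    by simp_all
  then have "cmod ((1 - cnj w) - (1 - cnj v)) = cmod (w - v)" "cmod (1 - cnj v) = cmod (v - 1)"
    by (simp_all only: complex_mod_cnj norm_minus_commute)
  then have "cmod ((1 - cnj w) - 1) < 1"
    using assms by (intro cmod_diff_one_lt_one_if_near_lower_point[of _ "1 - cnj v"]) simp_all
  then show ?thesis
    by simp
qed

lemma Im_affine_cnj_le:
  assumes "Im u \<le> 0" and "Im v \<le> 0" and "0 \<le> Re z" and "Re z \<le> 1" and "0 \<le> Im z"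
  shows "Im (u + (v - u) * cnj z) \<le> cmod (v - u) * Im z"
proof -
  have "Im (u + (v - u) * cnj z) = ((1 - Re z) * Im u + Re z * Im v) - Re (v - u) * Im z"
    by (simp add: algebra_simps)
  moreover have "(1 - Re z) * Im u + Re z * Im v \<le> 0"
    using assms(1-4) by (simp add: add_nonpos_nonpos mult_nonneg_nonpos)
  moreover have "- Re (v - u) * Im z \<le> cmod (v - u) * Im z"
    using assms(5) abs_Re_le_cmod[of "v - u"] by (intro mult_right_mono) auto
  ultimately show ?thesis
    by linarith
qed

lemma affine_cnj_in_curved_trapezoid_if_upper:
  assumes "z \<in> curved_trapezoid \<theta>" and "0 < Im (u + (v - u) * cnj z)"
    and "Im u \<le> 0" and "Im v \<le> 0" and "0 \<le> Re v" and "Re v < Re u" and "Re u \<le> 1"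
    and "cmod (v - u) \<le> cmod u" and "cmod (v - u) \<le> cmod (v - 1)" and "cmod (v - u) \<le> 1"
  shows "u + (v - u) * cnj z \<in> curved_trapezoid \<theta>"
proof -
  define w where "w = u + (v - u) * cnj z"
  define d where "d = cmod (v - u)"
  have z: "0 < Im z" "Im z < sin \<theta>" "cmod z < 1" "cmod (z - 1) < 1"
    using assms(1) unfolding curved_trapezoid_eq by auto
  have "0 < Re z" "Re z < 1"
    using assms(1) unfolding curved_trapezoid_def by auto
  have "0 < d"
    using assms(6) by (auto simp: d_def)
  have "w - u = (v - u) * cnj z" "w - v = (v - u) * cnj (z - 1)"
    by (simp_all add: w_def algebra_simps)
  then have "cmod (w - u) = d * cmod z" "cmod (w - v) = d * cmod (z - 1)"
    by (simp_all only: d_def norm_mult complex_mod_cnj)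
  moreover have "d * cmod z < d" "d * cmod (z - 1) < d"
    using z(3,4) \<open>0 < d\<close> by simp_all
  ultimately have "cmod (w - u) < cmod u" "cmod (w - v) < cmod (v - 1)"
    using assms(8,9) unfolding d_def by linarith+
  then have "cmod (w - 1) < 1" "cmod w < 1"
    using assms(2-7) unfolding w_def [symmetric]
    by (auto intro: cmod_diff_one_lt_one_if_near_lower_point cmod_lt_one_if_near_lower_point)
  have "Im w \<le> d * Im z"
    unfolding w_def d_def using assms(3,4) z(1) \<open>0 < Re z\<close> \<open>Re z < 1\<close>
    by (intro Im_affine_cnj_le) auto
  also have "\<dots> \<le> Im z"
    using z(1) assms(10) by (simp add: d_def mult_left_le_one_le)
  finally show ?thesis
    unfolding w_def [symmetric] curved_trapezoid_eq
    using assms(2) z(2) \<open>cmod (w - 1) < 1\<close> \<open>cmod w < 1\<close> by (simp add: w_def [symmetric])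
qed

theorem lemma6:
  fixes \<theta> :: real and u v :: complex
  assumes "pi / 4 \<le> \<theta>" and "\<theta> < pi / 3"
    and "u \<in> lower_half_plane" and "v \<in> lower_half_plane"
    and "0 < Re u" and "Re u < 1"
    and "\<bar>polar_angle u v - pi\<bar> < pi / 6"
    and "dist u v \<le> dist 0 u" and "dist 0 u < 1"
    and "dist u v \<le> dist 1 v" and "dist 1 v < 1"
  shows "translate_set u (scale_set (dist u v) (rot (polar_angle u v)
            (reflect_x (curved_trapezoid \<theta>)))) - curved_trapezoid \<theta>
         \<subseteq> lower_half_plane"
proof
  fix w
  assume "w \<in> translate_set u (scale_set (dist u v) (rot (polar_angle u v)
      (reflect_x (curved_trapezoid \<theta>)))) - curved_trapezoid \<theta>"
  then obtain z where z: "z \<in> curved_trapezoid \<theta>" and w: "w = u + (v - u) * cnj z"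
    and "w \<notin> curved_trapezoid \<theta>"
    unfolding translate_scale_rot_reflect_polar_angle by auto
  have "Re v < Re u"
    using assms(7) pi_gt_zero by (intro Re_lt_if_polar_angle_near_pi) linarith
  moreover have "0 \<le> Re v"
    using assms(11) abs_Re_le_cmod[of "v - 1"] by (simp add: dist_norm norm_minus_commute)
  moreover have "Im u \<le> 0" "Im v \<le> 0"
    using assms(3,4) by (auto simp: lower_half_plane_def)
  moreover have "cmod (v - u) \<le> cmod u" "cmod (v - u) \<le> cmod (v - 1)" "cmod (v - u) \<le> 1"
    using assms(8-10) by (auto simp: dist_norm norm_minus_commute)
  ultimately have "\<not> 0 < Im w"
    using affine_cnj_in_curved_trapezoid_if_upper[OF z] assms(6) w \<open>w \<notin> curved_trapezoid \<theta>\<close>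
    by auto
  then show "w \<in> lower_half_plane"
    by (simp add: lower_half_plane_def)
qed

end
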